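(* Let $\mathcal S$ be a nonempty self-dual, nested, chain-vanishing collection of nonempty subsets of a set $X$. Then $\sim_{\mathcal S}$ is an equivalence relation on $\mathcal S$ and the graph $\mathcal T_{\mathcal S}$ is a tree (connected, acyclic, without loops or multiple edges).
   Context: Fix a nonempty set $X$; $A^c:=X\setminus A$, $A^1:=A$, $A^{-1}:=A^c$. Sets $A,B\subseteq X$ are orthogonal, $A\perp B$, if $A\cap B=\emptyset$ and $A\ne B^c$. For a collection $\mathcal S$ of nonempty subsets of $X$ and $A,B\in\mathcal S$, $B$ is $\mathcal S$-maximally orthogonal to $A$ if $B\perp A$ and there is no $C\in\mathcal S$ with $C\perp A$ and $C\supsetneq B$; $[A]_{\mathcal S}:=\{A\}\cup\{B\in\mathcal S: B \text{ is } \mathcal S\text{-maximally orthogonal to } A\}$; $A\sim_{\mathcal S}B$ iff $A\in[B]_{\mathcal S}$. A chain is a sequence $(A_n)_{n\in\mathbb N}$ strictly increasing or strictly decreasing under inclusion; a decreasing (resp. increasing) chain is $\mathcal S$-vanishing if there is no $B\in\mathcal S$ with $B\subseteq A_n$ (resp. $B\cap A_n=\emptyset$) for all $n$; $\mathcal S$ is chain-vanishing if every chain of members of $\mathcal S$ is $\mathcal S$-vanishing. Sets $A,B$ are nested if some corner $A^i\cap B^j$ ($i,j\in\{-1,1\}$) is empty; $\mathcal S$ is nested if any two members are nested. $\mathcal S$ is self-dual if $A\in\mathcal S\Rightarrow A^c\in\mathcal S$. $\mathcal T_{\mathcal S}$ is the undirected graph with vertex set $\mathcal S/{\sim_{\mathcal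 S}}$ having an edge between $[A]_{\mathcal S}$ and $[A^c]_{\mathcal S}$ for every $A$ with $A,A^c\in\mathcal S$. *)

theory Defs
  imports Main
begin

definition orth :: "'a set \<Rightarrow> 'a set \<Rightarrow> 'a set \<Rightarrow> bool" where
  "orth X A B \<longleftrightarrow> A \<inter> B = {} \<and> A \<noteq> X - B"

definition max_orth :: "'a set \<Rightarrow> 'a set set \<Rightarrow> 'a set \<Rightarrow> 'a set \<Rightarrow> bool" where
  "max_orth X S A B \<longleftrightarrow> orth X B A \<and> \<not> (\<exists>C\<in>S. orth X C A \<and> B \<subset> C)"

definition cls :: "'a set \<Rightarrow> 'a set set \<Rightarrow> 'a set \<Rightarrow> 'a set set" where
  "cls X S A = {A} \<union> {B \<in> S. max_orth X S A B}"

definition simrel :: "'a set \<Rightarrow> 'a set set \<Rightarrow> ('a set \<times> 'a set) set" where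
  "simrel X S = {(A, B). A \<in> S \<and> B \<in> S \<and> A \<in> cls X S B}"

definition strict_inc_chain :: "(nat \<Rightarrow> 'a set) \<Rightarrow> bool" where
  "strict_inc_chain f \<longleftrightarrow> (\<forall>n. f n \<subset> f (Suc n))"

definition strict_dec_chain :: "(nat \<Rightarrow> 'a set) \<Rightarrow> bool" where
  "strict_dec_chain f \<longleftrightarrow> (\<forall>n. f (Suc n) \<subset> f n)"

definition vanishing_dec :: "'a set set \<Rightarrow> (nat \<Rightarrow> 'a set) \<Rightarrow> bool" where
  "vanishing_dec S f \<longleftrightarrow> \<not> (\<exists>B\<in>S. \<forall>n. B \<subseteq> f n)"

definition vanishing_inc :: "'a set set \<Rightarrow> (nat \<Rightarrow> 'a set) \<Rightarrow> bool" where
  "vanishing_inc S f \<longleftrightarrow> \<not> (\<exists>B\<in>S. \<forall>n. B \<inter> f n = {})"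

definition chain_vanishing :: "'a set set \<Rightarrow> bool" where
  "chain_vanishing S \<longleftrightarrow>
     (\<forall>f. (\<forall>n. f n \<in> S) \<longrightarrow>
        (strict_inc_chain f \<longrightarrow> vanishing_inc S f) \<and>
        (strict_dec_chain f \<longrightarrow> vanishing_dec S f))"

definition nested_pair :: "'a set \<Rightarrow> 'a set \<Rightarrow> 'a set \<Rightarrow> bool" where
  "nested_pair X A B \<longleftrightarrow>
     A \<inter> B = {} \<or> A \<inter> (X - B) = {} \<or> (X - A) \<inter> B = {} \<or> (X - A) \<inter> (X - B) = {}"

definition nested :: "'a set \<Rightarrow> 'a set set \<Rightarrow> bool" where
  "nested X S \<longleftrightarrow> (\<forall>A\<in>S. \<forall>B\<in>S. nested_pair X A B)"

definition self_dual :: "'a set \<Rightarrow> 'a set set \<Rightarrow> bool" where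
  "self_dual X S \<longleftrightarrow> (\<forall>A\<in>S. X - A \<in> S)"

text \<open>Undirected multigraphs: vertex set V, edge set E, and an endpoint map
  ends giving the set of endpoints of each edge (one element for a loop).\<close>

definition ug_walk_adj :: "'e set \<Rightarrow> ('e \<Rightarrow> 'v set) \<Rightarrow> ('v \<times> 'v) set" where
  "ug_walk_adj E ends = {(u, v). \<exists>e\<in>E. ends e = {u, v}}"

definition ug_no_loops :: "'e set \<Rightarrow> ('e \<Rightarrow> 'v set) \<Rightarrow> bool" where
  "ug_no_loops E ends \<longleftrightarrow> (\<forall>e\<in>E. \<forall>u v. ends e = {u, v} \<longrightarrow> u \<noteq> v)"

definition ug_no_multi :: "'e set \<Rightarrow> ('e \<Rightarrow> 'v set) \<Rightarrow> bool" where
  "ug_no_multi E ends \<longleftrightarrow> inj_on ends E"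

definition ug_connected :: "'v set \<Rightarrow> 'e set \<Rightarrow> ('e \<Rightarrow> 'v set) \<Rightarrow> bool" where
  "ug_connected V E ends \<longleftrightarrow> (\<forall>u\<in>V. \<forall>v\<in>V. (u, v) \<in> (ug_walk_adj E ends)\<^sup>*)"

text \<open>A cycle of length n \<ge> 1: n distinct edges and n distinct vertices, the i-th edge
  joining the i-th and the (i+1 mod n)-th vertex (length 1 = loop, 2 = parallel edges).\<close>
definition ug_cycle :: "'e set \<Rightarrow> ('e \<Rightarrow> 'v set) \<Rightarrow> 'e list \<Rightarrow> 'v list \<Rightarrow> bool" where
  "ug_cycle E ends es vs \<longleftrightarrow>
     length es = length vs \<and> es \<noteq> [] \<and> distinct es \<and> distinct vs \<and> set es \<subseteq> E \<and>
     (\<forall>i < length es. ends (es ! i) = {vs ! i, vs ! (Suc i mod length vs)})"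

definition ug_acyclic :: "'e set \<Rightarrow> ('e \<Rightarrow> 'v set) \<Rightarrow> bool" where
  "ug_acyclic E ends \<longleftrightarrow> \<not> (\<exists>es vs. ug_cycle E ends es vs)"

definition ug_wf :: "'v set \<Rightarrow> 'e set \<Rightarrow> ('e \<Rightarrow> 'v set) \<Rightarrow> bool" where
  "ug_wf V E ends \<longleftrightarrow> (\<forall>e\<in>E. ends e \<subseteq> V \<and> (\<exists>u v. ends e = {u, v}))"

definition ug_tree :: "'v set \<Rightarrow> 'e set \<Rightarrow> ('e \<Rightarrow> 'v set) \<Rightarrow> bool" where
  "ug_tree V E ends \<longleftrightarrow> ug_wf V E ends \<and> ug_connected V E ends \<and> ug_acyclic E ends \<and>
     ug_no_loops E ends \<and> ug_no_multi E ends"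

definition TS_verts :: "'a set \<Rightarrow> 'a set set \<Rightarrow> 'a set set set" where
  "TS_verts X S = S // simrel X S"

definition TS_edges :: "'a set \<Rightarrow> 'a set set \<Rightarrow> 'a set set set" where
  "TS_edges X S = {{A, X - A} | A. A \<in> S \<and> X - A \<in> S}"

definition TS_ends :: "'a set \<Rightarrow> 'a set set \<Rightarrow> 'a set set \<Rightarrow> 'a set set set" where
  "TS_ends X S e = (\<lambda>C. simrel X S `` {C}) ` e"

end

theory Submission
  imports Defs
begin

text \<open>Write B \<lessdot> D (covered_in S B D) when B is a maximal member of S properly contained
  in D. Then B is S-maximally orthogonal to A exactly when B \<lessdot> X - A, so A \<sim> B means
  A = B or A \<lessdot> X - B.
  Complementation reverses inclusion on S, which makes this relation symmetric, and nestedness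
  forces two distinct sets covered by the same X - B to be disjoint, which gives transitivity.

  If [A] = [B] with A \<noteq> B then A \<subset> X - B. Orienting the edges of a cycle of T_S as
  {A_i, X - A_i} with [X - A_i] = [A_(i+1)] therefore gives a strictly decreasing
  sequence A_0 \<supset> A_1 \<supset> \<dots> that cannot close up; the same fact rules out loops and
  parallel edges. For connectivity, a member A \<subset> D climbs to D through covering steps
  A \<lessdot> C, each of which makes [A] = [X - C] adjacent to [C]; chain vanishing makes every such
  climb finite, and nestedness reduces an arbitrary pair of members to this situation.\<close>

definition covered_in :: "'a set set \<Rightarrow> 'a set \<Rightarrow> 'a set \<Rightarrow> bool" where
  "covered_in S B D \<longleftrightarrow> B \<subset> D \<and> \<not> (\<exists>C\<in>S. B \<subset> C \<and> C \<subset> D)"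

lemma wf_psubset_above:
  assumes "chain_vanishing S" and "A \<in> S"
  shows "wf {(C', C). C' \<in> S \<and> C \<in> S \<and> A \<subseteq> C' \<and> C' \<subset> C}" (is "wf ?R")
proof (rule ccontr)
  assume "\<not> wf ?R"
  then obtain f where "\<forall>i. (f (Suc i), f i) \<in> ?R"
    unfolding wf_iff_no_infinite_down_chain by blast
  then have f: "\<forall>i. f i \<in> S \<and> A \<subseteq> f (Suc i) \<and> f (Suc i) \<subset> f i"
    by blast
  then have "strict_dec_chain f" "\<forall>n. A \<subseteq> f n"
    unfolding strict_dec_chain_def by blast+
  with f assms show False
    unfolding chain_vanishing_def vanishing_dec_def by blast
qed

lemma wf_psupset_disjoint:
  assumes "chain_vanishing S" and "B \<in> S"
  shows "wf {(C, C'). C \<in> S \<and> C' \<in> S \<and> C' \<subset> C \<and> C \<inter> B = {}}" (is "wf ?R")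
proof (rule ccontr)
  assume "\<not> wf ?R"
  then obtain f where "\<forall>i. (f (Suc i), f i) \<in> ?R"
    unfolding wf_iff_no_infinite_down_chain by blast
  then have f: "\<forall>i. f i \<in> S \<and> f i \<subset> f (Suc i) \<and> f (Suc i) \<inter> B = {}"
    by blast
  then have "strict_inc_chain f" "\<forall>n. B \<inter> f n = {}"
    unfolding strict_inc_chain_def by blast+
  with f assms show False
    unfolding chain_vanishing_def vanishing_inc_def by blast
qed

lemma exists_covering_below:
  assumes "chain_vanishing S" and "A \<in> S" and "C\<^sub>0 \<in> S" and "A \<subset> C\<^sub>0"
  shows "\<exists>C\<in>S. covered_in S A C \<and> C \<subseteq> C\<^sub>0"
proof -
  define Q where "Q = {C \<in> S. A \<subset> C \<and> C \<subseteq> C\<^sub>0}"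
  have "C\<^sub>0 \<in> Q" using assms unfolding Q_def by blast
  then obtain C where C: "C \<in> Q"
    and min: "\<And>C'. (C', C) \<in> {(C', C). C' \<in> S \<and> C \<in> S \<and> A \<subseteq> C' \<and> C' \<subset> C} \<Longrightarrow> C' \<notin> Q"
    by (rule wfE_min[OF wf_psubset_above[OF assms(1,2)]]) blast
  have "\<not> (\<exists>C'\<in>S. A \<subset> C' \<and> C' \<subset> C)"
  proof
    assume "\<exists>C'\<in>S. A \<subset> C' \<and> C' \<subset> C"
    then obtain C' where "C' \<in> S" "A \<subset> C'" "C' \<subset> C" by blast
    with C min[of C'] show False unfolding Q_def by auto
  qed
  with C show ?thesis unfolding Q_def covered_in_def by blast
qed

lemma no_strict_descent_mod:
  fixes f :: "nat \<Rightarrow> 'b::order"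
  assumes "n > 0" and descent: "\<And>i. i < n \<Longrightarrow> f (Suc i mod n) < f i"
  shows False
proof -
  have "f (k mod n) < f 0" if "0 < k" "k \<le> n" for k
    using that
  proof (induction k)
    case (Suc k)
    show ?case
    proof (cases "k = 0")
      case True
      then show ?thesis using descent[OF \<open>n > 0\<close>] by simp
    next
      case False
      with Suc have "f (k mod n) < f 0" by simp
      with descent[of k] Suc.prems show ?thesis by simp
    qed
  qed simp
  from this[of n] \<open>n > 0\<close> show False by simp
qed

locale nested_set_system =
  fixes X :: "'a set" and S :: "'a set set"
  assumes member_nonempty_subset: "\<And>A. A \<in> S \<Longrightarrow> A \<noteq> {} \<and> A \<subseteq> X"
    and self_dual: "self_dual X S"
    and nested: "nested X S"
begin

lemma member_nonempty: "A \<in> S \<Longrightarrow> A \<noteq> {}"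
  using member_nonempty_subset by blast

lemma member_subset: "A \<in> S \<Longrightarrow> A \<subseteq> X"
  using member_nonempty_subset by blast

lemma compl_member: "A \<in> S \<Longrightarrow> X - A \<in> S"
  using self_dual unfolding self_dual_def by blast

lemma double_compl: "A \<in> S \<Longrightarrow> X - (X - A) = A"
  using member_subset by blast

lemma nested_cases:
  assumes "A \<in> S" and "B \<in> S"
  shows "A \<inter> B = {} \<or> A \<subseteq> B \<or> B \<subseteq> A \<or> X - A \<subseteq> B"
  using nested assms member_subset[OF assms(1)] member_subset[OF assms(2)]
  unfolding nested_def nested_pair_def by blast

lemma max_orth_iff_covered:
  assumes "A \<in> S" and "B \<in> S"
  shows "max_orth X S A B \<longleftrightarrow> covered_in S B (X - A)"
proof -
  have "orth X C A \<longleftrightarrow> C \<subset> X - A" if "C \<in> S" for C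
    using member_subset[OF that] member_subset[OF assms(1)] unfolding orth_def by blast
  with assms(2) show ?thesis unfolding max_orth_def covered_in_def by blast
qed

lemma simrel_iff:
  "(A, B) \<in> simrel X S \<longleftrightarrow> A \<in> S \<and> B \<in> S \<and> (A = B \<or> covered_in S A (X - B))"
  unfolding simrel_def cls_def using max_orth_iff_covered by auto

lemma covered_compl_sym:
  assumes "A \<in> S" and "B \<in> S" and "covered_in S A (X - B)"
  shows "covered_in S B (X - A)"
  unfolding covered_in_def
proof (intro conjI notI)
  show "B \<subset> X - A"
    using assms member_subset[OF assms(1)] member_subset[OF assms(2)]
    unfolding covered_in_def by blast
  assume "\<exists>C\<in>S. B \<subset> C \<and> C \<subset> X - A"
  then obtain C where "C \<in> S" "B \<subset> C" "C \<subset> X - A" by blast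
  then have "X - C \<in> S" "A \<subset> X - C" "X - C \<subset> X - B"
    using compl_member member_subset assms(1,2) by blast+
  with assms(3) show False unfolding covered_in_def by blast
qed

lemma covered_same_disjoint:
  assumes S: "A \<in> S" "B \<in> S" "C \<in> S" and "A \<noteq> C"
    and AB: "covered_in S A (X - B)" and CB: "covered_in S C (X - B)"
  shows "A \<inter> C = {}"
proof -
  have A: "A \<subset> X - B" and C: "C \<subset> X - B" using AB CB unfolding covered_in_def by blast+
  have "\<not> A \<subset> C" using AB C S(3) unfolding covered_in_def by blast
  moreover have "\<not> C \<subset> A" using CB A S(1) unfolding covered_in_def by blast
  moreover have "\<not> X - A \<subseteq> C"
    using A C member_nonempty[OF S(2)] member_subset[OF S(2)] by blast
  ultimately show ?thesis using nested_cases[OF S(1,3)] \<open>A \<noteq> C\<close> by blast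
qed

lemma covered_compl_trans:
  assumes S: "A \<in> S" "B \<in> S" "C \<in> S" and "A \<noteq> C"
    and AB: "covered_in S A (X - B)" and CB: "covered_in S C (X - B)"
  shows "covered_in S A (X - C)"
  unfolding covered_in_def
proof (intro conjI notI)
  have A: "A \<subset> X - B" and C: "C \<subset> X - B" using AB CB unfolding covered_in_def by blast+
  have ne: "A \<noteq> {}" "B \<noteq> {}" "C \<noteq> {}" using member_nonempty S by blast+
  have "A \<inter> C = {}" using covered_same_disjoint[OF assms] .
  moreover have "A \<noteq> X - C" using A C ne(2) member_subset[OF S(2)] by blast
  ultimately show "A \<subset> X - C" using member_subset[OF S(1)] by blast
  assume "\<exists>D\<in>S. A \<subset> D \<and> D \<subset> X - C"
  then obtain D where D: "D \<in> S" "A \<subset> D" "D \<subset> X - C" by blast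
  from nested_cases[OF D(1) S(2)] show False
  proof (elim disjE)
    assume "D \<inter> B = {}"
    then have "D \<subset> X - B" using D(3) C ne(3) member_subset[OF D(1)] by blast
    with AB D show False unfolding covered_in_def by blast
  next
    assume "D \<subseteq> B"
    with A D(2) ne(1) show False by blast
  next
    assume "B \<subseteq> D"
    have "covered_in S B (X - C)" using covered_compl_sym[OF S(3,2) CB] .
    with \<open>B \<subseteq> D\<close> D have "B = D" unfolding covered_in_def by blast
    with A D(2) ne(1) show False by blast
  next
    assume "X - D \<subseteq> B"
    with C D(3) ne(3) show False by blast
  qed
qed

lemma equiv_simrel: "equiv S (simrel X S)"
proof (rule equivI)
  show "simrel X S \<subseteq> S \<times> S" "refl_on S (simrel X S)"
    unfolding refl_on_def using simrel_iff by auto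
  show "sym (simrel X S)"
    unfolding sym_def using simrel_iff covered_compl_sym by metis
  show "trans (simrel X S)"
    unfolding trans_def using simrel_iff covered_compl_sym covered_compl_trans by metis
qed

abbreviation vertex :: "'a set \<Rightarrow> 'a set set" where
  "vertex A \<equiv> simrel X S `` {A}"

abbreviation adj :: "('a set set \<times> 'a set set) set" where
  "adj \<equiv> ug_walk_adj (TS_edges X S) (TS_ends X S)"

lemma vertex_eq_iff: "A \<in> S \<Longrightarrow> B \<in> S \<Longrightarrow> vertex A = vertex B \<longleftrightarrow> (A, B) \<in> simrel X S"
  by (rule eq_equiv_class_iff[OF equiv_simrel])

lemma vertex_eq_if_covered:
  "A \<in> S \<Longrightarrow> B \<in> S \<Longrightarrow> covered_in S A (X - B) \<Longrightarrow> vertex A = vertex B"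
  by (simp add: vertex_eq_iff simrel_iff)

lemma psubset_compl_if_vertex_eq:
  "A \<in> S \<Longrightarrow> B \<in> S \<Longrightarrow> vertex A = vertex B \<Longrightarrow> A \<noteq> B \<Longrightarrow> A \<subset> X - B"
  by (simp add: vertex_eq_iff simrel_iff covered_in_def)

lemma vertex_compl_neq:
  assumes "A \<in> S" shows "vertex A \<noteq> vertex (X - A)"
proof
  assume "vertex A = vertex (X - A)"
  moreover have "A \<noteq> X - A" using member_nonempty[OF assms] by blast
  ultimately have "A \<subset> X - (X - A)"
    by (rule psubset_compl_if_vertex_eq[OF assms compl_member[OF assms]])
  then show False using double_compl[OF assms] by simp
qed

lemma vertex_pair_inj:
  assumes S: "A \<in> S" "B \<in> S"
    and "vertex A = vertex B" and "vertex (X - A) = vertex (X - B)"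
  shows "A = B"
proof (rule ccontr)
  assume "A \<noteq> B"
  then have "A \<subset> X - B" using assms psubset_compl_if_vertex_eq by simp
  moreover have "X - A \<noteq> X - B" using \<open>A \<noteq> B\<close> S member_subset by blast
  then have "X - A \<subset> X - (X - B)"
    using assms by (intro psubset_compl_if_vertex_eq compl_member)
  ultimately show False using member_subset[OF S(1)] member_subset[OF S(2)] by blast
qed

lemma TS_ends_pair [simp]: "TS_ends X S {A, B} = {vertex A, vertex B}"
  by (simp add: TS_ends_def)

lemma TS_edges_iff: "e \<in> TS_edges X S \<longleftrightarrow> (\<exists>A\<in>S. e = {A, X - A})"
  unfolding TS_edges_def using compl_member by auto

lemma TS_edge_oriented:
  assumes "e \<in> TS_edges X S" and "TS_ends X S e = {u, v}"
  obtains A where "A \<in> S" "e = {A, X - A}" "vertex A = u" "vertex (X - A) = v"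
proof -
  obtain B where B: "B \<in> S" "e = {B, X - B}"
    using assms(1) unfolding TS_edges_iff by (elim bexE)
  with assms(2) have "{vertex B, vertex (X - B)} = {u, v}" by simp
  then have "vertex B = u \<and> vertex (X - B) = v \<or> vertex B = v \<and> vertex (X - B) = u"
    by (rule doubleton_eq_iff[THEN iffD1])
  then show ?thesis
  proof (elim disjE conjE)
    assume "vertex B = u" "vertex (X - B) = v"
    with B show ?thesis by (rule that)
  next
    assume "vertex B = v" "vertex (X - B) = u"
    moreover have "e = {X - B, X - (X - B)}"
      using B double_compl[OF B(1)] by (simp add: insert_commute)
    ultimately show ?thesis
      using that[OF compl_member[OF B(1)]] double_compl[OF B(1)] by simp
  qed
qed

lemma compl_edge: "A \<in> S \<Longrightarrow> {A, X - A} \<in> TS_edges X S"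
  unfolding TS_edges_iff by (rule bexI[where x = A]) simp_all

lemma adj_compl: "A \<in> S \<Longrightarrow> (vertex A, vertex (X - A)) \<in> adj"
  unfolding ug_walk_adj_def by (simp add: bexI[OF _ compl_edge])

lemma adj_compl_rev: "A \<in> S \<Longrightarrow> (vertex (X - A), vertex A) \<in> adj"
  using adj_compl[OF compl_member] double_compl by metis

lemma walk_sym: "(u, v) \<in> adj\<^sup>* \<Longrightarrow> (v, u) \<in> adj\<^sup>*"
proof -
  have "adj\<inverse> = adj" unfolding ug_walk_adj_def by (auto simp: insert_commute)
  then show "(u, v) \<in> adj\<^sup>* \<Longrightarrow> (v, u) \<in> adj\<^sup>*" by (metis rtrancl_converseI)
qed

lemma TS_wf: "ug_wf (TS_verts X S) (TS_edges X S) (TS_ends X S)"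
  unfolding ug_wf_def TS_verts_def
proof
  fix e assume "e \<in> TS_edges X S"
  then obtain A where A: "A \<in> S" "e = {A, X - A}" unfolding TS_edges_iff by (elim bexE)
  then have ends: "TS_ends X S e = {vertex A, vertex (X - A)}" by simp
  show "TS_ends X S e \<subseteq> S // simrel X S \<and> (\<exists>u v. TS_ends X S e = {u, v})"
    unfolding ends
  proof
    show "{vertex A, vertex (X - A)} \<subseteq> S // simrel X S"
      using A(1) by (simp add: quotientI compl_member)
    show "\<exists>u v. {vertex A, vertex (X - A)} = {u, v}" by (rule exI)+ (rule refl)
  qed
qed

lemma TS_no_loops: "ug_no_loops (TS_edges X S) (TS_ends X S)"
  unfolding ug_no_loops_def
proof (intro ballI allI impI)
  fix e u v assume "e \<in> TS_edges X S" "TS_ends X S e = {u, v}"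
  then obtain A where "A \<in> S" "vertex A = u" "vertex (X - A) = v" by (rule TS_edge_oriented)
  with vertex_compl_neq[of A] show "u \<noteq> v" by simp
qed

lemma TS_no_multi: "ug_no_multi (TS_edges X S) (TS_ends X S)"
  unfolding ug_no_multi_def
proof (rule inj_onI)
  fix e e' assume e: "e \<in> TS_edges X S" and e': "e' \<in> TS_edges X S"
    and ends: "TS_ends X S e = TS_ends X S e'"
  obtain A where A: "A \<in> S" "e = {A, X - A}"
    using e unfolding TS_edges_iff by (elim bexE)
  then have "TS_ends X S e' = {vertex A, vertex (X - A)}" using ends by simp
  with e' obtain A' where A': "A' \<in> S" "e' = {A', X - A'}"
    "vertex A' = vertex A" "vertex (X - A') = vertex (X - A)"
    by (rule TS_edge_oriented)
  have "A = A'" by (rule vertex_pair_inj[OF A(1) A'(1) A'(3)[symmetric] A'(4)[symmetric]])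
  with A(2) A'(2) show "e = e'" by simp
qed

lemma TS_acyclic: "ug_acyclic (TS_edges X S) (TS_ends X S)"
  unfolding ug_acyclic_def
proof
  assume "\<exists>es vs. ug_cycle (TS_edges X S) (TS_ends X S) es vs"
  then obtain es vs where cycle: "ug_cycle (TS_edges X S) (TS_ends X S) es vs" by blast
  define n where "n = length es"
  have n: "n > 0" and dist: "distinct es" and edges: "\<And>i. i < n \<Longrightarrow> es ! i \<in> TS_edges X S"
    and ends: "\<And>i. i < n \<Longrightarrow> TS_ends X S (es ! i) = {vs ! i, vs ! (Suc i mod n)}"
    using cycle unfolding ug_cycle_def n_def by auto
  have "\<exists>A. A \<in> S \<and> es ! i = {A, X - A} \<and> vertex A = vs ! i \<and> vertex (X - A) = vs ! (Suc i mod n)"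
    if "i < n" for i
    using edges[OF that] ends[OF that] by (rule TS_edge_oriented) blast
  then obtain A where AS: "\<And>i. i < n \<Longrightarrow> A i \<in> S"
    and A_edge: "\<And>i. i < n \<Longrightarrow> es ! i = {A i, X - A i}"
    and A_tail: "\<And>i. i < n \<Longrightarrow> vertex (A i) = vs ! i"
    and A_head: "\<And>i. i < n \<Longrightarrow> vertex (X - A i) = vs ! (Suc i mod n)"
    by metis
  have descent: "A (Suc i mod n) \<subset> A i" if i: "i < n" for i
  proof -
    define j where "j = Suc i mod n"
    have j: "j < n" using n by (simp add: j_def)
    have "vertex (A j) = vertex (X - A i)"
      using A_tail[OF j] A_head[OF i] unfolding j_def by (rule trans[OF _ sym])
    moreover have "A j \<noteq> X - A i"
    proof
      assume eq: "A j = X - A i"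
      then have "X - A j = A i" using double_compl[OF AS[OF i]] by simp
      with eq have "es ! j = es ! i" by (simp add: A_edge[OF i] A_edge[OF j] insert_commute)
      then have "j = i" using dist i j by (simp add: n_def nth_eq_iff_index_eq)
      with eq have "A i = X - A i" by simp
      then show False using member_nonempty[OF AS[OF i]] by blast
    qed
    ultimately have "A j \<subset> X - (X - A i)"
      by (rule psubset_compl_if_vertex_eq[OF AS[OF j] compl_member[OF AS[OF i]]])
    then show ?thesis using double_compl[OF AS[OF i]] by (simp add: j_def)
  qed
  show False using no_strict_descent_mod[of n A, OF n descent] .
qed

end

locale chain_vanishing_nested_system = nested_set_system +
  assumes chain_vanishing: "chain_vanishing S"
begin

lemma walk_to_compl_of_superset:
  assumes D: "D \<in> S"
  shows "A \<in> S \<Longrightarrow> A \<subset> D \<Longrightarrow> (vertex A, vertex (X - D)) \<in> adj\<^sup>*"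
proof (induction A rule: wf_induct_rule[OF wf_psupset_disjoint[OF chain_vanishing compl_member[OF D]]])
  case (1 A)
  show ?case
  proof (cases "covered_in S A D")
    case True
    then have "covered_in S A (X - (X - D))" using double_compl[OF D] by simp
    then have "vertex A = vertex (X - D)"
      by (rule vertex_eq_if_covered[OF "1.prems"(1) compl_member[OF D]])
    then show ?thesis by simp
  next
    case False
    then obtain C\<^sub>0 where C\<^sub>0: "C\<^sub>0 \<in> S" "A \<subset> C\<^sub>0" "C\<^sub>0 \<subset> D"
      using "1.prems"(2) unfolding covered_in_def by blast
    then obtain C where C: "C \<in> S" "covered_in S A C" "C \<subseteq> C\<^sub>0"
      using exists_covering_below[OF chain_vanishing "1.prems"(1)] by blast
    have CD: "C \<subset> D" using C(3) C\<^sub>0(3) by blast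
    have "covered_in S A (X - (X - C))" using C(2) double_compl[OF C(1)] by simp
    then have "vertex A = vertex (X - C)"
      by (rule vertex_eq_if_covered[OF "1.prems"(1) compl_member[OF C(1)]])
    then have step: "(vertex A, vertex C) \<in> adj" using adj_compl_rev[OF C(1)] by simp
    have "(C, A) \<in> {(C, C'). C \<in> S \<and> C' \<in> S \<and> C' \<subset> C \<and> C \<inter> (X - D) = {}}"
      using C(1,2) CD "1.prems"(1) unfolding covered_in_def by blast
    from "1.IH"[OF this C(1) CD] show ?thesis by (rule converse_rtrancl_into_rtrancl[OF step])
  qed
qed

lemma walk_if_disjoint:
  assumes A: "A \<in> S" and B: "B \<in> S" and "A \<inter> B = {}"
  shows "(vertex A, vertex B) \<in> adj\<^sup>*"
proof (cases "A = X - B")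
  case True
  then have "B = X - A" using double_compl[OF B] by simp
  then show ?thesis using adj_compl[OF A] by simp
next
  case False
  then have "A \<subset> X - B" using assms member_subset[OF A] by blast
  from walk_to_compl_of_superset[OF compl_member[OF B] A this]
  show ?thesis unfolding double_compl[OF B] .
qed

lemma walk_between_members:
  assumes A: "A \<in> S" and B: "B \<in> S"
  shows "(vertex A, vertex B) \<in> adj\<^sup>*"
  using nested_cases[OF A B]
proof (elim disjE)
  assume "A \<inter> B = {}"
  then show ?thesis by (rule walk_if_disjoint[OF A B])
next
  assume "A \<subseteq> B"
  then have "(vertex A, vertex (X - B)) \<in> adj\<^sup>*"
    by (intro walk_if_disjoint A compl_member B) blast
  then show ?thesis using adj_compl_rev[OF B] by (rule rtrancl_into_rtrancl)
next
  assume "B \<subseteq> A"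
  then have "(vertex B, vertex (X - A)) \<in> adj\<^sup>*"
    by (intro walk_if_disjoint B compl_member A) blast
  then have "(vertex B, vertex A) \<in> adj\<^sup>*" using adj_compl_rev[OF A] by (rule rtrancl_into_rtrancl)
  then show ?thesis by (rule walk_sym)
next
  assume "X - A \<subseteq> B"
  then have "(vertex (X - A), vertex (X - B)) \<in> adj\<^sup>*"
    by (intro walk_if_disjoint compl_member A B) blast
  with adj_compl[OF A] adj_compl_rev[OF B] show ?thesis
    by (blast intro: converse_rtrancl_into_rtrancl rtrancl_into_rtrancl)
qed

lemma TS_connected: "ug_connected (TS_verts X S) (TS_edges X S) (TS_ends X S)"
  unfolding ug_connected_def TS_verts_def
proof (intro ballI)
  fix u v assume "u \<in> S // simrel X S" "v \<in> S // simrel X S"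
  then obtain A B where "A \<in> S" "B \<in> S" "u = vertex A" "v = vertex B" by (elim quotientE)
  then show "(u, v) \<in> adj\<^sup>*" using walk_between_members by simp
qed

end

theorem mainTheorem5:
  fixes X :: "'a set" and S :: "'a set set"
  assumes "S \<noteq> {}"
    and "\<forall>A\<in>S. A \<noteq> {} \<and> A \<subseteq> X"
    and "self_dual X S"
    and "nested X S"
    and "chain_vanishing S"
  shows "equiv S (simrel X S) \<and> ug_tree (TS_verts X S) (TS_edges X S) (TS_ends X S)"
proof -
  interpret chain_vanishing_nested_system X S
    using assms(2-5) by unfold_locales blast+
  show ?thesis
    unfolding ug_tree_def
    using equiv_simrel TS_wf TS_connected TS_acyclic TS_no_loops TS_no_multi by blast
qed

end
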